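(* Let $k\ge 2$ be an integer and let $G$ be a finite simple connected graph of order $n\ge k$. Then $$W_{tsp,k}(G)\le k\binom{n}{k}\mu(G)=\frac{2}{k-1}\binom{n-2}{k-2}W(G).$$ Equality holds if and only if $k\in\{2,3\}$, or $k>3$ and $G$ is the star $S_n$ or the complete graph $K_n$.
   Context: $d(u,v)$ is the graph distance; $W(G)=\sum_{\{u,v\}\subseteq V}d(u,v)$ is the Wiener index and $\mu(G)=W(G)/\binom{n}{2}$ the average distance. For a set $S$ of $k$ vertices, $\mathrm{tsp}_k(S)$ is the length (number of edge traversals, with multiplicity) of a shortest closed walk in $G$ visiting all vertices of $S$, and $W_{tsp,k}(G)=\sum_{S\subseteq V,\,|S|=k}\mathrm{tsp}_k(S)$. $S_n$ denotes the star $K_{1,n-1}$. *)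

theory Defs
  imports Complex_Main
begin

definition simple_graph :: "'a set \<Rightarrow> ('a \<Rightarrow> 'a \<Rightarrow> bool) \<Rightarrow> bool" where
  "simple_graph V E \<longleftrightarrow> finite V \<and>
     (\<forall>u v. E u v \<longrightarrow> u \<in> V \<and> v \<in> V \<and> u \<noteq> v \<and> E v u)"

text \<open>A walk is a nonempty list of vertices, consecutive ones adjacent;
  its length is the number of edge traversals, i.e. length xs - 1.\<close>
definition is_walk :: "'a set \<Rightarrow> ('a \<Rightarrow> 'a \<Rightarrow> bool) \<Rightarrow> 'a list \<Rightarrow> bool" where
  "is_walk V E xs \<longleftrightarrow> xs \<noteq> [] \<and> set xs \<subseteq> V \<and>
     (\<forall>i. Suc i < length xs \<longrightarrow> E (xs ! i) (xs ! Suc i))"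

definition connected_graph :: "'a set \<Rightarrow> ('a \<Rightarrow> 'a \<Rightarrow> bool) \<Rightarrow> bool" where
  "connected_graph V E \<longleftrightarrow>
     (\<forall>u\<in>V. \<forall>v\<in>V. \<exists>xs. is_walk V E xs \<and> hd xs = u \<and> last xs = v)"

definition gdist :: "'a set \<Rightarrow> ('a \<Rightarrow> 'a \<Rightarrow> bool) \<Rightarrow> 'a \<Rightarrow> 'a \<Rightarrow> nat" where
  "gdist V E u v = (LEAST m. \<exists>xs. is_walk V E xs \<and> hd xs = u \<and> last xs = v
                                  \<and> length xs = Suc m)"

text \<open>Wiener index: sum of distances over unordered pairs of distinct vertices
  (each unordered pair counted once; written as half the ordered double sum).\<close>
definition wiener :: "'a set \<Rightarrow> ('a \<Rightarrow> 'a \<Rightarrow> bool) \<Rightarrow> real" where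
  "wiener V E = (\<Sum>u\<in>V. \<Sum>v\<in>V. real (gdist V E u v)) / 2"

definition avg_dist :: "'a set \<Rightarrow> ('a \<Rightarrow> 'a \<Rightarrow> bool) \<Rightarrow> real" where
  "avg_dist V E = wiener V E / real (card V choose 2)"

definition tsp :: "'a set \<Rightarrow> ('a \<Rightarrow> 'a \<Rightarrow> bool) \<Rightarrow> 'a set \<Rightarrow> nat" where
  "tsp V E S = (LEAST m. \<exists>xs. is_walk V E xs \<and> hd xs = last xs \<and> S \<subseteq> set xs
                             \<and> length xs = Suc m)"

definition wiener_tsp :: "'a set \<Rightarrow> ('a \<Rightarrow> 'a \<Rightarrow> bool) \<Rightarrow> nat \<Rightarrow> nat" where
  "wiener_tsp V E k = (\<Sum>S\<in>{S. S \<subseteq> V \<and> card S = k}. tsp V E S)"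

definition is_star :: "'a set \<Rightarrow> ('a \<Rightarrow> 'a \<Rightarrow> bool) \<Rightarrow> bool" where
  "is_star V E \<longleftrightarrow> (\<exists>c\<in>V. \<forall>u\<in>V. \<forall>v\<in>V. E u v \<longleftrightarrow> (u \<noteq> v \<and> (u = c \<or> v = c)))"

definition is_complete :: "'a set \<Rightarrow> ('a \<Rightarrow> 'a \<Rightarrow> bool) \<Rightarrow> bool" where
  "is_complete V E \<longleftrightarrow> (\<forall>u\<in>V. \<forall>v\<in>V. E u v \<longleftrightarrow> u \<noteq> v)"

end

theory Submission
  imports Defs
begin

text \<open>Write \<open>T(S)\<close> for the sum of the distances over ordered pairs of \<open>S\<close>.
  Building a cyclic order of \<open>S\<close> by cheapest insertion yields a tour of cost at most
  \<open>T(S) / (|S| - 1)\<close>, and following shortest paths along it gives a closed walk of the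
  same length, so \<open>(k - 1) tsp(S) \<le> T(S)\<close>. Summing over all \<open>k\<close>-sets, each pair of
  vertices lies in \<open>C(n-2, k-2)\<close> of them, which gives the bound; equality holds iff
  \<open>(k - 1) tsp(S) = T(S)\<close> for every \<open>k\<close>-set.
  For \<open>k \<le> 3\<close> a closed walk through \<open>S\<close> is at least as long as the triangle on \<open>S\<close>;
  in a complete graph it has at least \<open>k\<close> steps, and in a star every leaf visit costs two
  steps. Conversely, if some four vertices have two pairings of different weight, one of
  their three 4-cycles beats the average and starting the insertion from it makes the
  inequality strict; a connected graph in which no such four vertices exist is a star or
  complete.\<close>

section \<open>Tours for an arbitrary cost function\<close>

fun path_cost :: "('a \<Rightarrow> 'a \<Rightarrow> nat) \<Rightarrow> 'a list \<Rightarrow> nat" where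
  "path_cost d (a # b # xs) = d a b + path_cost d (b # xs)"
| "path_cost d _ = 0"

definition tour_cost :: "('a \<Rightarrow> 'a \<Rightarrow> nat) \<Rightarrow> 'a list \<Rightarrow> nat" where
  "tour_cost d xs = path_cost d xs + d (last xs) (hd xs)"

definition dist_sum :: "('a \<Rightarrow> 'a \<Rightarrow> nat) \<Rightarrow> 'a set \<Rightarrow> nat" where
  "dist_sum d S = (\<Sum>a\<in>S. \<Sum>b\<in>S. d a b)"

lemma path_cost_snoc: "xs \<noteq> [] \<Longrightarrow> path_cost d (xs @ [a]) = path_cost d xs + d (last xs) a"
  by (induction xs rule: list_nonempty_induct) (auto simp: neq_Nil_conv)

lemma tour_cost_snoc:
  "xs \<noteq> [] \<Longrightarrow> tour_cost d (xs @ [a]) + d (last xs) (hd xs) = tour_cost d xs + d (last xs) a + d a (hd xs)"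
  by (simp add: tour_cost_def path_cost_snoc)

lemma tour_cost_rotate1: "tour_cost d (rotate1 xs) = tour_cost d xs"
proof (cases xs)
  case (Cons a ys)
  then show ?thesis
    using path_cost_snoc[of ys d a] by (cases ys) (simp_all add: tour_cost_def)
qed simp

lemma tour_cost_rotate: "tour_cost d (rotate n xs) = tour_cost d xs"
  by (induction n) (simp_all add: tour_cost_rotate1)

lemma path_cost_conv_sum: "path_cost d xs = (\<Sum>i<length xs - 1. d (xs ! i) (xs ! Suc i))"
  by (induction xs rule: induct_list012) (simp_all add: sum.lessThan_Suc_shift del: sum.lessThan_Suc)

lemma tour_cost_conv_sum:
  assumes "xs \<noteq> []"
  shows "tour_cost d xs = (\<Sum>i<length xs. d (xs ! i) (rotate1 xs ! i))"
proof -
  obtain m where m: "length xs = Suc m"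
    using assms by (cases xs) auto
  have "(\<Sum>i<m. d (xs ! i) (rotate1 xs ! i)) = (\<Sum>i<m. d (xs ! i) (xs ! Suc i))"
    using m by (intro sum.cong) (simp_all add: nth_rotate1)
  moreover have "rotate1 xs ! m = xs ! 0"
    using m by (simp add: nth_rotate1)
  ultimately show ?thesis
    using m assms by (simp add: tour_cost_def path_cost_conv_sum last_conv_nth hd_conv_nth)
qed

lemma sum_nth_distinct: "distinct xs \<Longrightarrow> (\<Sum>i<length xs. f (xs ! i)) = (\<Sum>x\<in>set xs. f x)"
  using sum.reindex_bij_betw[OF bij_betw_nth[of xs "{..<length xs}" "set xs"], of f] by simp

lemma exists_le_average:
  assumes "m > 0"
  shows "\<exists>j<m. m * f j \<le> (\<Sum>i<m. f i :: nat)"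
proof (rule ccontr)
  assume "\<not> ?thesis"
  then have "(\<Sum>j<m. \<Sum>i<m. f i) < (\<Sum>j<m. m * f j)"
    using assms by (intro sum_strict_mono) auto
  then show False
    by (simp add: sum_distrib_left)
qed

text \<open>Here \<open>rotate1 ys ! j\<close> is the cyclic successor of \<open>ys ! j\<close>.\<close>

lemma tour_cost_insert_after:
  assumes "j < length ys"
  shows "tour_cost d (rotate (Suc j) ys @ [x]) + d (ys ! j) (rotate1 ys ! j)
    = tour_cost d ys + d (ys ! j) x + d x (rotate1 ys ! j)"
proof -
  define m where "m = length ys"
  have "ys \<noteq> []" "m > 0"
    using assms by (auto simp: m_def)
  have "rotate (Suc j) ys ! (m - 1) = ys ! ((j + m) mod m)"
    using nth_rotate[of "m - 1" ys "Suc j"] \<open>m > 0\<close> by (simp add: m_def del: rotate_Suc)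
  then have "last (rotate (Suc j) ys) = ys ! j"
    using assms \<open>ys \<noteq> []\<close> \<open>m > 0\<close> by (simp add: m_def last_conv_nth)
  moreover have "hd (rotate (Suc j) ys) = rotate1 ys ! j"
    using assms \<open>ys \<noteq> []\<close> hd_rotate_conv_nth[of ys "Suc j"]
    by (simp add: nth_rotate1 del: rotate_Suc)
  ultimately show ?thesis
    using tour_cost_snoc[of "rotate (Suc j) ys" d x] \<open>ys \<noteq> []\<close>
    by (simp add: tour_cost_rotate1 tour_cost_rotate del: rotate_Suc)
qed

text \<open>Cheapest insertion: summed over the \<open>m\<close> places at which \<open>x\<close> can be inserted,
  every edge of the tour \<open>ys\<close> is removed once and every distance between \<open>x\<close> and
  \<open>ys\<close> is added twice; the cheapest place is at most the average.\<close>

lemma exists_tour_insertion: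
  assumes "distinct ys" "ys \<noteq> []" "x \<notin> set ys"
    and sym: "\<And>y. y \<in> set ys \<Longrightarrow> d x y = d y x"
  shows "\<exists>zs. distinct zs \<and> set zs = insert x (set ys) \<and>
    length ys * tour_cost d zs \<le> (length ys - 1) * tour_cost d ys + 2 * (\<Sum>y\<in>set ys. d y x)"
proof -
  define m where "m = length ys"
  define zs where "zs j = rotate (Suc j) ys @ [x]" for j
  have m: "m > 0"
    using assms(2) by (simp add: m_def)
  have insert_cost: "tour_cost d (zs j) + d (ys ! j) (rotate1 ys ! j)
      = tour_cost d ys + d (ys ! j) x + d x (rotate1 ys ! j)" if "j < m" for j
    using tour_cost_insert_after that by (simp add: zs_def m_def)
  have rot: "distinct (rotate1 ys)" "set (rotate1 ys) = set ys" "length (rotate1 ys) = m"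
    using assms(1) by (simp_all add: m_def)
  have "(\<Sum>j<m. tour_cost d (zs j)) + tour_cost d ys
      = (\<Sum>j<m. tour_cost d (zs j) + d (ys ! j) (rotate1 ys ! j))"
    using tour_cost_conv_sum[OF assms(2)] by (simp add: m_def sum.distrib)
  also have "\<dots> = (\<Sum>j<m. tour_cost d ys + d (ys ! j) x + d x (rotate1 ys ! j))"
    using insert_cost by simp
  also have "\<dots> = m * tour_cost d ys + (\<Sum>y\<in>set ys. d y x) + (\<Sum>y\<in>set ys. d x y)"
    using sum_nth_distinct[OF assms(1), of "\<lambda>y. d y x"] sum_nth_distinct[OF rot(1), of "d x"] rot
    by (simp add: m_def sum.distrib)
  also have "(\<Sum>y\<in>set ys. d x y) = (\<Sum>y\<in>set ys. d y x)"
    using sym by simp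
  finally have total: "(\<Sum>j<m. tour_cost d (zs j)) + tour_cost d ys
      = m * tour_cost d ys + 2 * (\<Sum>y\<in>set ys. d y x)"
    by simp
  obtain j where j: "j < m" "m * tour_cost d (zs j) \<le> (\<Sum>j<m. tour_cost d (zs j))"
    using exists_le_average[OF m, of "\<lambda>j. tour_cost d (zs j)"] by blast
  have "m * tour_cost d ys = (m - 1) * tour_cost d ys + tour_cost d ys"
    using m by (cases m) simp_all
  then have "m * tour_cost d (zs j) \<le> (m - 1) * tour_cost d ys + 2 * (\<Sum>y\<in>set ys. d y x)"
    using j(2) total by linarith
  moreover have "distinct (zs j)" "set (zs j) = insert x (set ys)"
    using assms(1,3) by (simp_all add: zs_def)
  ultimately show ?thesis
    unfolding m_def by blast
qed

lemma dist_sum_insert: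
  assumes "finite A" "x \<notin> A" and sym: "\<And>y. y \<in> A \<Longrightarrow> d x y = d y x"
  shows "dist_sum d (insert x A) = dist_sum d A + 2 * (\<Sum>y\<in>A. d y x) + d x x"
  using assms by (simp add: dist_sum_def sum.distrib)

lemma exists_tour_extension:
  assumes "finite F"
  shows "distinct ys \<Longrightarrow> 2 \<le> length ys \<Longrightarrow> set ys \<inter> F = {} \<Longrightarrow>
    (\<And>x y. x \<in> set ys \<union> F \<Longrightarrow> y \<in> set ys \<union> F \<Longrightarrow> d x y = d y x) \<Longrightarrow>
    (length ys - 1) * tour_cost d ys + e \<le> dist_sum d (set ys) \<Longrightarrow>
    \<exists>zs. distinct zs \<and> set zs = set ys \<union> F \<and> (length zs - 1) * tour_cost d zs + e \<le> dist_sum d (set zs)"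
  using assms
proof (induction F rule: finite_induct)
  case empty
  then show ?case by auto
next
  case (insert x F)
  then obtain zs0 where zs0: "distinct zs0" "set zs0 = set ys \<union> F"
      "(length zs0 - 1) * tour_cost d zs0 + e \<le> dist_sum d (set zs0)"
    by auto
  have "x \<notin> set zs0" "zs0 \<noteq> []"
    using zs0(2) insert by auto
  moreover have sym: "\<And>y. y \<in> set zs0 \<Longrightarrow> d x y = d y x"
    using zs0(2) insert.prems(4) by blast
  ultimately obtain zs where zs: "distinct zs" "set zs = insert x (set zs0)"
      "length zs0 * tour_cost d zs \<le> (length zs0 - 1) * tour_cost d zs0 + 2 * (\<Sum>y\<in>set zs0. d y x)"
    using exists_tour_insertion[OF zs0(1)] by blast
  have "length zs = Suc (length zs0)"
    using zs \<open>x \<notin> set zs0\<close> distinct_card[OF zs(1)] distinct_card[OF zs0(1)] by simp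
  moreover have "dist_sum d (set zs) = dist_sum d (set zs0) + 2 * (\<Sum>y\<in>set zs0. d y x) + d x x"
    using zs(2) dist_sum_insert[of "set zs0" x d] \<open>x \<notin> set zs0\<close> sym by simp
  ultimately show ?case
    using zs zs0 by (intro exI[of _ zs]) auto
qed

lemma exists_tour_le_dist_sum:
  assumes "finite S" "2 \<le> card S" and sym: "\<And>x y. x \<in> S \<Longrightarrow> y \<in> S \<Longrightarrow> d x y = d y x"
  shows "\<exists>zs. distinct zs \<and> set zs = S \<and> (card S - 1) * tour_cost d zs \<le> dist_sum d S"
proof -
  obtain T where "T \<subseteq> S" "card T = 2"
    using assms(2) by (rule obtain_subset_with_card_n)
  then obtain a b where ab: "a \<in> S" "b \<in> S" "a \<noteq> b"
    by (auto simp: card_2_iff)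
  have "(length [a, b] - 1) * tour_cost d [a, b] + 0 \<le> dist_sum d (set [a, b])"
    using ab by (simp add: tour_cost_def dist_sum_def)
  moreover have "set [a, b] \<union> (S - set [a, b]) = S"
    using ab by auto
  ultimately obtain zs where "distinct zs" "set zs = S"
      "(length zs - 1) * tour_cost d zs + 0 \<le> dist_sum d (set zs)"
    using exists_tour_extension[of "S - set [a, b]" "[a, b]" d 0] ab assms(1) sym by auto
  then show ?thesis
    using distinct_card[of zs] by auto
qed

text \<open>Each of the three tours through four points is the union of two of the three
  pairings \<open>M1, M2, M3\<close>, so the tours average to \<open>2 (M1 + M2 + M3) / 3\<close>, which is at most a
  third of the distance sum; if two pairings differ, the cheapest tour is below average.\<close>

lemma exists_four_point_tour:
  assumes "distinct [a, b, c, e]" "d a b + d c e \<noteq> d a c + d b e"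
    and sym: "\<And>x y. x \<in> {a, b, c, e} \<Longrightarrow> y \<in> {a, b, c, e} \<Longrightarrow> d x y = d y x"
  shows "\<exists>ys. distinct ys \<and> set ys = {a, b, c, e} \<and> 3 * tour_cost d ys < dist_sum d {a, b, c, e}"
proof -
  define M1 M2 M3 where "M1 = d a b + d c e" and "M2 = d a c + d b e" and "M3 = d a e + d b c"
  have "2 * (M1 + M2 + M3) \<le> dist_sum d {a, b, c, e}"
    using assms(1) sym[of a b] sym[of a c] sym[of a e] sym[of b c] sym[of b e] sym[of c e]
    by (simp add: dist_sum_def M1_def M2_def M3_def)
  moreover have "tour_cost d [a, b, c, e] = M1 + M3" "tour_cost d [a, c, b, e] = M2 + M3"
      "tour_cost d [a, b, e, c] = M1 + M2"
    using sym[of e a] sym[of c b] sym[of e c] sym[of c a]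
    by (simp_all add: tour_cost_def M1_def M2_def M3_def)
  ultimately have "M1 = M2" if "\<forall>ys\<in>{[a, b, c, e], [a, c, b, e], [a, b, e, c]}.
      dist_sum d {a, b, c, e} \<le> 3 * tour_cost d ys"
    using that by auto
  then obtain ys where "ys \<in> {[a, b, c, e], [a, c, b, e], [a, b, e, c]}"
      "3 * tour_cost d ys < dist_sum d {a, b, c, e}"
    using assms(2) by (force simp: M1_def M2_def not_le)
  then show ?thesis
    using assms(1) by (intro exI[of _ ys]) auto
qed

lemma exists_tour_lt_dist_sum:
  assumes "finite S" "{a, b, c, e} \<subseteq> S" "distinct [a, b, c, e]" "d a b + d c e \<noteq> d a c + d b e"
    and sym: "\<And>x y. x \<in> S \<Longrightarrow> y \<in> S \<Longrightarrow> d x y = d y x"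
  shows "\<exists>zs. distinct zs \<and> set zs = S \<and> (card S - 1) * tour_cost d zs < dist_sum d S"
proof -
  obtain ys where ys: "distinct ys" "set ys = {a, b, c, e}" "3 * tour_cost d ys < dist_sum d {a, b, c, e}"
    using exists_four_point_tour[OF assms(3,4)] assms(2) sym by (metis subsetD)
  have "length ys = 4"
    using distinct_card[OF ys(1)] ys(2) assms(3) by simp
  then have "(length ys - 1) * tour_cost d ys + 1 \<le> dist_sum d (set ys)"
    using ys by simp
  moreover have "set ys \<union> (S - set ys) = S"
    using ys(2) assms(2) by auto
  ultimately obtain zs where "distinct zs" "set zs = S"
      "(length zs - 1) * tour_cost d zs + 1 \<le> dist_sum d (set zs)"
    using exists_tour_extension[of "S - set ys" ys d 1] ys(1) \<open>length ys = 4\<close> assms(1) sym by auto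
  then show ?thesis
    using distinct_card[of zs] by auto
qed

section \<open>Pairs in \<open>k\<close>-subsets\<close>

lemma card_subsets_containing_pair:
  assumes "finite V" "a \<in> V" "b \<in> V" "a \<noteq> b" "2 \<le> k"
  shows "card {S. S \<subseteq> V \<and> card S = k \<and> a \<in> S \<and> b \<in> S} = (card V - 2) choose (k - 2)"
proof -
  let ?X = "{S. S \<subseteq> V \<and> card S = k \<and> a \<in> S \<and> b \<in> S}"
  let ?Y = "{T. T \<subseteq> V - {a, b} \<and> card T = k - 2}"
  have fin: "finite T" if "T \<subseteq> V - {a, b}" for T
    using that assms(1) finite_subset by blast
  have "bij_betw (\<lambda>S. S - {a, b}) ?X ?Y"
  proof (rule bij_betw_byWitness[where f' = "\<lambda>T. T \<union> {a, b}"])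
    show "(\<lambda>S. S - {a, b}) ` ?X \<subseteq> ?Y"
      using assms by (auto simp: card_Diff_subset finite_subset)
    show "(\<lambda>T. T \<union> {a, b}) ` ?Y \<subseteq> ?X"
    proof
      fix S assume "S \<in> (\<lambda>T. T \<union> {a, b}) ` ?Y"
      then obtain T where T: "T \<subseteq> V - {a, b}" "card T = k - 2" "S = T \<union> {a, b}"
        by blast
      then have "card S = card T + card {a, b}"
        using fin[OF T(1)] card_Un_disjoint[of T "{a, b}"] by auto
      then show "S \<in> ?X"
        using T assms by auto
    qed
  qed auto
  then have "card ?X = card ?Y"
    by (rule bij_betw_same_card)
  also have "\<dots> = card (V - {a, b}) choose (k - 2)"
    using assms(1) by (simp add: n_subsets)
  also have "card (V - {a, b}) = card V - 2"
    using assms by (simp add: card_Diff_subset)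
  finally show ?thesis .
qed

lemma sum_dist_sum_subsets:
  assumes "finite V" "2 \<le> k" and diag: "\<And>a. a \<in> V \<Longrightarrow> d a a = 0"
  shows "(\<Sum>S | S \<subseteq> V \<and> card S = k. dist_sum d S)
    = ((card V - 2) choose (k - 2)) * (\<Sum>a\<in>V. \<Sum>b\<in>V. d a b)"
proof -
  let ?Sk = "{S. S \<subseteq> V \<and> card S = k}"
  let ?in = "\<lambda>S a b. if a \<in> S \<and> b \<in> S then d a b else 0"
  have "dist_sum d S = (\<Sum>a\<in>V. \<Sum>b\<in>V. ?in S a b)" if "S \<subseteq> V" for S
  proof -
    have "(\<Sum>a\<in>V. \<Sum>b\<in>V. ?in S a b) = (\<Sum>a\<in>V. if a \<in> S then \<Sum>b\<in>V. if b \<in> S then d a b else 0 else 0)"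
      by (intro sum.cong) auto
    also have "\<dots> = dist_sum d S"
      using that assms(1) by (simp add: sum.inter_restrict[symmetric] Int_absorb1 dist_sum_def)
    finally show ?thesis ..
  qed
  then have "(\<Sum>S\<in>?Sk. dist_sum d S) = (\<Sum>S\<in>?Sk. \<Sum>a\<in>V. \<Sum>b\<in>V. ?in S a b)"
    by simp
  also have "\<dots> = (\<Sum>a\<in>V. \<Sum>b\<in>V. \<Sum>S\<in>?Sk. ?in S a b)"
    by (subst sum.swap) (subst sum.swap, rule refl)
  also have "\<dots> = (\<Sum>a\<in>V. \<Sum>b\<in>V. ((card V - 2) choose (k - 2)) * d a b)"
  proof (intro sum.cong refl)
    fix a b assume ab: "a \<in> V" "b \<in> V"
    have "(\<Sum>S\<in>?Sk. ?in S a b) = card {S. S \<subseteq> V \<and> card S = k \<and> a \<in> S \<and> b \<in> S} * d a b"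
      using assms(1) by (simp add: sum.If_cases Int_def conj_ac)
    then show "(\<Sum>S\<in>?Sk. ?in S a b) = ((card V - 2) choose (k - 2)) * d a b"
      using card_subsets_containing_pair[OF assms(1) ab _ assms(2)] diag ab by (cases "a = b") auto
  qed
  finally show ?thesis
    by (simp add: sum_distrib_left)
qed

section \<open>Walks and graph distance\<close>

lemma is_walk_iff: "is_walk V E xs \<longleftrightarrow> xs \<noteq> [] \<and> set xs \<subseteq> V \<and> successively E xs"
  by (simp add: is_walk_def successively_conv_nth)

lemma is_walk_join:
  assumes "is_walk V E xs" "is_walk V E ys" "last xs = hd ys"
  shows "is_walk V E (xs @ tl ys)" "hd (xs @ tl ys) = hd xs" "last (xs @ tl ys) = last ys"
    and "length (xs @ tl ys) = length xs + length ys - 1"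
proof -
  obtain y ys' where ys: "ys = y # ys'"
    using assms(2) by (cases ys) (auto simp: is_walk_iff)
  have "xs \<noteq> []"
    using assms(1) by (simp add: is_walk_iff)
  then show "is_walk V E (xs @ tl ys)" "hd (xs @ tl ys) = hd xs" "last (xs @ tl ys) = last ys"
      "length (xs @ tl ys) = length xs + length ys - 1"
    using assms ys by (auto simp: is_walk_iff successively_append_iff successively_Cons)
qed

lemma walk_nth_in_V: "is_walk V E xs \<Longrightarrow> i < length xs \<Longrightarrow> xs ! i \<in> V"
  by (auto simp: is_walk_def)

lemma nth_length_eq_hd:
  assumes "hd xs = last xs" "length xs = Suc m"
  shows "xs ! m = xs ! 0"
proof -
  have "xs \<noteq> []"
    using assms(2) by auto
  then show ?thesis
    using assms by (simp add: hd_conv_nth last_conv_nth)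
qed

lemma set_conv_nth_image_closed:
  assumes "hd xs = last xs" "length xs = Suc m" "0 < m"
  shows "set xs = (!) xs ` {..<m}"
proof
  show "set xs \<subseteq> (!) xs ` {..<m}"
  proof
    fix v assume "v \<in> set xs"
    then obtain i where i: "i < Suc m" "xs ! i = v"
      using assms(2) by (auto simp: in_set_conv_nth)
    show "v \<in> (!) xs ` {..<m}"
    proof (cases "i = m")
      case True
      then have "v = xs ! 0"
        using i nth_length_eq_hd[OF assms(1,2)] by simp
      then show ?thesis
        using assms(3) by blast
    qed (use i in auto)
  qed
  show "(!) xs ` {..<m} \<subseteq> set xs"
    using assms(2) by auto
qed

locale connected_simple_graph =
  fixes V :: "'a set" and E :: "'a \<Rightarrow> 'a \<Rightarrow> bool"
  assumes simple: "simple_graph V E" and connected: "connected_graph V E"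
begin

abbreviation \<delta> :: "'a \<Rightarrow> 'a \<Rightarrow> nat" where
  "\<delta> \<equiv> gdist V E"

lemma finite_V: "finite V"
  using simple by (simp add: simple_graph_def)

lemma adj_sym: "E u v \<Longrightarrow> E v u"
  using simple by (simp add: simple_graph_def)

lemma adj_in_V: "E u v \<Longrightarrow> u \<in> V \<and> v \<in> V \<and> u \<noteq> v"
  using simple by (simp add: simple_graph_def)

lemma gdist_le_walk:
  assumes "is_walk V E xs" "hd xs = u" "last xs = v"
  shows "\<delta> u v \<le> length xs - 1"
  unfolding gdist_def
  by (rule Least_le) (use assms in \<open>auto simp: is_walk_def\<close>)

lemma shortest_walk:
  assumes "u \<in> V" "v \<in> V"
  obtains xs where "is_walk V E xs" "hd xs = u" "last xs = v" "length xs = Suc (\<delta> u v)"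
proof -
  obtain xs where "is_walk V E xs" "hd xs = u" "last xs = v"
    using connected assms unfolding connected_graph_def by blast
  then have "\<exists>m xs. is_walk V E xs \<and> hd xs = u \<and> last xs = v \<and> length xs = Suc m"
    by (intro exI[of _ "length xs - 1"] exI[of _ xs]) (auto simp: is_walk_def)
  then have "\<exists>xs. is_walk V E xs \<and> hd xs = u \<and> last xs = v \<and> length xs = Suc (\<delta> u v)"
    unfolding gdist_def by (rule LeastI_ex)
  then show ?thesis
    using that by blast
qed

lemma gdist_triangle:
  assumes "u \<in> V" "v \<in> V" "w \<in> V"
  shows "\<delta> u w \<le> \<delta> u v + \<delta> v w"
proof -
  obtain xs where xs: "is_walk V E xs" "hd xs = u" "last xs = v" "length xs = Suc (\<delta> u v)"
    using shortest_walk[OF assms(1,2)] by blast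
  obtain ys where ys: "is_walk V E ys" "hd ys = v" "last ys = w" "length ys = Suc (\<delta> v w)"
    using shortest_walk[OF assms(2,3)] by blast
  have "last xs = hd ys"
    using xs ys by simp
  then show ?thesis
    using gdist_le_walk[OF is_walk_join(1-3)[OF xs(1) ys(1)]] is_walk_join(4)[OF xs(1) ys(1)] xs ys
    by simp
qed

lemma gdist_sym:
  assumes "u \<in> V" "v \<in> V"
  shows "\<delta> u v = \<delta> v u"
proof -
  have "\<delta> a b \<le> \<delta> b a" if ab: "a \<in> V" "b \<in> V" for a b
  proof -
    obtain xs where xs: "is_walk V E xs" "hd xs = b" "last xs = a" "length xs = Suc (\<delta> b a)"
      using shortest_walk[OF ab(2,1)] by blast
    have "successively (\<lambda>x y. E y x) xs"
      by (rule successively_mono[of E]) (use xs(1) adj_sym in \<open>auto simp: is_walk_iff\<close>)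
    then have "is_walk V E (rev xs)"
      using xs(1) by (simp add: is_walk_iff)
    then show ?thesis
      using gdist_le_walk[of "rev xs" a b] xs by (simp add: hd_rev last_rev)
  qed
  then show ?thesis
    using assms by (simp add: order_antisym)
qed

lemma gdist_self [simp]: "u \<in> V \<Longrightarrow> \<delta> u u = 0"
  using gdist_le_walk[of "[u]" u u] by (simp add: is_walk_def)

lemma gdist_eq_0_iff:
  assumes "u \<in> V" "v \<in> V"
  shows "\<delta> u v = 0 \<longleftrightarrow> u = v"
proof
  assume "\<delta> u v = 0"
  moreover obtain xs where "hd xs = u" "last xs = v" "length xs = Suc (\<delta> u v)"
    using shortest_walk[OF assms] by blast
  ultimately show "u = v"
    by (cases xs) auto
qed (use assms in simp)

lemma gdist_eq_1_iff:
  assumes "u \<in> V" "v \<in> V"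
  shows "\<delta> u v = 1 \<longleftrightarrow> E u v"
proof
  assume "\<delta> u v = 1"
  moreover obtain xs where "is_walk V E xs" "hd xs = u" "last xs = v" "length xs = Suc (\<delta> u v)"
    using shortest_walk[OF assms] by blast
  ultimately show "E u v"
    by (auto simp: is_walk_iff length_Suc_conv)
next
  assume uv: "E u v"
  then have "is_walk V E [u, v]"
    using adj_in_V by (auto simp: is_walk_iff)
  then have "\<delta> u v \<le> 1"
    using gdist_le_walk[of "[u, v]" u v] by simp
  moreover have "\<delta> u v \<noteq> 0"
    using gdist_eq_0_iff adj_in_V[OF uv] by simp
  ultimately show "\<delta> u v = 1"
    by simp
qed

lemma gdist_adj: "E u v \<Longrightarrow> \<delta> u v = 1"
  using gdist_eq_1_iff adj_in_V by blast

lemma gdist_eq_2: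
  assumes "E u c" "E c w" "u \<noteq> w" "\<not> E u w"
  shows "\<delta> u w = 2"
proof -
  have V: "u \<in> V" "c \<in> V" "w \<in> V"
    using assms adj_in_V by auto
  have "\<delta> u w \<le> 2"
    using gdist_triangle[OF V] gdist_adj assms by simp
  moreover have "\<delta> u w \<noteq> 0" "\<delta> u w \<noteq> 1"
    using gdist_eq_0_iff gdist_eq_1_iff V assms by simp_all
  ultimately show ?thesis
    by linarith
qed

lemma gdist_walk_nth:
  assumes "is_walk V E xs" "i \<le> j" "j < length xs"
  shows "\<delta> (xs ! i) (xs ! j) \<le> j - i"
  using assms(2,3)
proof (induction j)
  case 0
  then show ?case
    using walk_nth_in_V[OF assms(1)] by simp
next
  case (Suc j)
  have V: "xs ! i \<in> V" "xs ! j \<in> V" "xs ! Suc j \<in> V"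
    using walk_nth_in_V[OF assms(1)] Suc.prems by auto
  show ?case
  proof (cases "i = Suc j")
    case True
    then show ?thesis
      using V(3) by simp
  next
    case False
    then have "\<delta> (xs ! i) (xs ! j) \<le> j - i"
      using Suc by simp
    moreover have "\<delta> (xs ! j) (xs ! Suc j) = 1"
      using assms(1) Suc.prems by (intro gdist_adj) (simp add: is_walk_def)
    ultimately show ?thesis
      using gdist_triangle[OF V] Suc.prems False by linarith
  qed
qed

lemma walk_through_list:
  "xs \<noteq> [] \<Longrightarrow> set xs \<subseteq> V \<Longrightarrow> \<exists>w. is_walk V E w \<and> hd w = hd xs \<and> last w = last xs
     \<and> set xs \<subseteq> set w \<and> length w = Suc (path_cost \<delta> xs)"
proof (induction xs rule: induct_list012)
  case (2 a)
  then show ?case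
    by (intro exI[of _ "[a]"]) (simp add: is_walk_def)
next
  case (3 a b r)
  then obtain w where w: "is_walk V E w" "hd w = b" "last w = last (b # r)" "set (b # r) \<subseteq> set w"
      "length w = Suc (path_cost \<delta> (b # r))"
    by auto
  have "a \<in> V" "b \<in> V"
    using "3.prems"(2) by auto
  then obtain p where p: "is_walk V E p" "hd p = a" "last p = b" "length p = Suc (\<delta> a b)"
    by (rule shortest_walk)
  have "p \<noteq> []" "w \<noteq> []"
    using p(1) w(1) by (simp_all add: is_walk_def)
  then have "set w \<subseteq> set (p @ tl w)" "a \<in> set (p @ tl w)"
    using p(2,3) w(2) by (auto simp: list.set_sel(1)[of p] elim: list.set_cases)
  then show ?case
    using is_walk_join[OF p(1) w(1)] p w by (intro exI[of _ "p @ tl w"]) auto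
qed simp

lemma closed_walk_through_list:
  assumes "xs \<noteq> []" "set xs \<subseteq> V"
  shows "\<exists>w. is_walk V E w \<and> hd w = last w \<and> set xs \<subseteq> set w \<and> length w = Suc (tour_cost \<delta> xs)"
proof -
  obtain w where w: "is_walk V E w" "hd w = hd xs" "last w = last xs" "set xs \<subseteq> set w"
      "length w = Suc (path_cost \<delta> xs)"
    using walk_through_list assms by blast
  have "last xs \<in> V" "hd xs \<in> V"
    using assms by auto
  then obtain p where p: "is_walk V E p" "hd p = last xs" "last p = hd xs"
      "length p = Suc (\<delta> (last xs) (hd xs))"
    by (rule shortest_walk)
  show ?thesis
    using is_walk_join[OF w(1) p(1)] w p by (intro exI[of _ "w @ tl p"]) (auto simp: tour_cost_def)
qed

lemma tsp_le_tour_cost: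
  assumes "xs \<noteq> []" "set xs \<subseteq> V" "S \<subseteq> set xs"
  shows "tsp V E S \<le> tour_cost \<delta> xs"
  unfolding tsp_def
  by (rule Least_le) (use closed_walk_through_list[OF assms(1,2)] assms(3) in blast)

lemma shortest_closed_walk:
  assumes "S \<subseteq> V" "S \<noteq> {}"
  obtains xs where "is_walk V E xs" "hd xs = last xs" "S \<subseteq> set xs" "length xs = Suc (tsp V E S)"
proof -
  obtain zs where zs: "set zs = S"
    using finite_list finite_subset[OF assms(1) finite_V] by blast
  then have "\<exists>m xs. is_walk V E xs \<and> hd xs = last xs \<and> S \<subseteq> set xs \<and> length xs = Suc m"
    using closed_walk_through_list[of zs] assms by auto
  then have "\<exists>xs. is_walk V E xs \<and> hd xs = last xs \<and> S \<subseteq> set xs \<and> length xs = Suc (tsp V E S)"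
    unfolding tsp_def by (rule LeastI_ex)
  then show ?thesis
    using that by blast
qed

lemma tsp_upper_bound:
  assumes "S \<subseteq> V" "2 \<le> card S"
  shows "(card S - 1) * tsp V E S \<le> dist_sum \<delta> S"
proof -
  have "finite S"
    using assms(1) finite_V finite_subset by blast
  then obtain zs where zs: "distinct zs" "set zs = S" "(card S - 1) * tour_cost \<delta> zs \<le> dist_sum \<delta> S"
    using exists_tour_le_dist_sum[of S \<delta>] assms gdist_sym by (meson subsetD)
  have "tsp V E S \<le> tour_cost \<delta> zs"
    using zs assms by (intro tsp_le_tour_cost) auto
  then show ?thesis
    using zs(3) mult_le_mono2 order_trans by blast
qed

lemma tsp_upper_bound_strict:
  assumes "S \<subseteq> V" "{a, b, c, e} \<subseteq> S" "distinct [a, b, c, e]" "\<delta> a b + \<delta> c e \<noteq> \<delta> a c + \<delta> b e"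
  shows "(card S - 1) * tsp V E S < dist_sum \<delta> S"
proof -
  have "finite S"
    using assms(1) finite_V finite_subset by blast
  then obtain zs where zs: "distinct zs" "set zs = S" "(card S - 1) * tour_cost \<delta> zs < dist_sum \<delta> S"
    using exists_tour_lt_dist_sum[of S a b c e \<delta>] assms gdist_sym by (meson subsetD)
  have "tsp V E S \<le> tour_cost \<delta> zs"
    using zs assms by (intro tsp_le_tour_cost) auto
  then show ?thesis
    using zs(3) mult_le_mono2 le_less_trans by blast
qed

section \<open>Lower bounds for closed walks\<close>

lemma closed_walk_triangle_ordered:
  assumes "is_walk V E xs" "hd xs = last xs" "length xs = Suc m" "p \<le> q" "q \<le> r" "r \<le> m"
  shows "\<delta> (xs ! p) (xs ! q) + \<delta> (xs ! q) (xs ! r) + \<delta> (xs ! r) (xs ! p) \<le> m"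
proof -
  have "xs ! m = xs ! 0"
    using assms(2,3) by (rule nth_length_eq_hd)
  then have "\<delta> (xs ! r) (xs ! 0) \<le> m - r"
    using gdist_walk_nth[OF assms(1), of r m] assms(3,6) by simp
  moreover have "\<delta> (xs ! r) (xs ! p) \<le> \<delta> (xs ! r) (xs ! 0) + \<delta> (xs ! 0) (xs ! p)"
    using walk_nth_in_V[OF assms(1)] assms(3-6) by (intro gdist_triangle) simp_all
  moreover have "\<delta> (xs ! p) (xs ! q) \<le> q - p" "\<delta> (xs ! q) (xs ! r) \<le> r - q" "\<delta> (xs ! 0) (xs ! p) \<le> p - 0"
    using assms(3-6) by (intro gdist_walk_nth[OF assms(1)]; simp)+
  ultimately show ?thesis
    using assms(4-6) by linarith
qed

lemma closed_walk_triangle: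
  assumes "is_walk V E xs" "hd xs = last xs" "length xs = Suc m" "p \<le> m" "q \<le> m" "r \<le> m"
  shows "\<delta> (xs ! p) (xs ! q) + \<delta> (xs ! q) (xs ! r) + \<delta> (xs ! r) (xs ! p) \<le> m"
proof -
  have "xs ! p \<in> V" "xs ! q \<in> V" "xs ! r \<in> V"
    using walk_nth_in_V[OF assms(1)] assms(3-6) by simp_all
  then have sym: "\<delta> (xs ! p) (xs ! q) = \<delta> (xs ! q) (xs ! p)" "\<delta> (xs ! q) (xs ! r) = \<delta> (xs ! r) (xs ! q)"
      "\<delta> (xs ! r) (xs ! p) = \<delta> (xs ! p) (xs ! r)"
    by (simp_all add: gdist_sym)
  note ordered = closed_walk_triangle_ordered[OF assms(1-3)]
  consider "p \<le> q" "q \<le> r" | "p \<le> r" "r \<le> q" | "q \<le> p" "p \<le> r" | "q \<le> r" "r \<le> p"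
    | "r \<le> p" "p \<le> q" | "r \<le> q" "q \<le> p"
    by (meson le_cases)
  then show ?thesis
  proof cases
    case 1
    show ?thesis
      using ordered[OF 1 assms(6)] by linarith
  next
    case 2
    show ?thesis
      using ordered[OF 2 assms(5)] sym by linarith
  next
    case 3
    show ?thesis
      using ordered[OF 3 assms(6)] sym by linarith
  next
    case 4
    show ?thesis
      using ordered[OF 4 assms(4)] sym by linarith
  next
    case 5
    show ?thesis
      using ordered[OF 5 assms(5)] sym by linarith
  next
    case 6
    show ?thesis
      using ordered[OF 6 assms(4)] sym by linarith
  qed
qed

lemma closed_walk_length_ge_card:
  assumes "is_walk V E xs" "hd xs = last xs" "length xs = Suc m" "S \<subseteq> set xs" "2 \<le> card S"
  shows "card S \<le> m"
proof (cases "m = 0")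
  case True
  then have "card S \<le> card (set xs)"
    using assms(4) by (intro card_mono) auto
  also have "\<dots> \<le> 1"
    using True assms(3) card_length[of xs] by simp
  finally show ?thesis
    using assms(5) by simp
next
  case False
  then have "card S \<le> card ((!) xs ` {..<m})"
    using set_conv_nth_image_closed[OF assms(2,3)] assms(4) by (intro card_mono) auto
  also have "\<dots> \<le> m"
    using card_image_le[of "{..<m}" "(!) xs"] by simp
  finally show ?thesis .
qed

text \<open>Every visit of an independent set is followed by a step outside it, so a
  closed walk spends at most half of its steps in an independent set.\<close>

lemma closed_walk_independent_visits:
  assumes "is_walk V E xs" "hd xs = last xs" "length xs = Suc m" "0 < m"
    and independent: "\<And>x y. x \<in> I \<Longrightarrow> y \<in> I \<Longrightarrow> \<not> E x y"
  shows "2 * card (set xs \<inter> I) \<le> m"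
proof -
  define L where "L = {i. i < m \<and> xs ! i \<in> I}"
  define next_pos where "next_pos i = Suc i mod m" for i
  have next_pos: "next_pos i = (if Suc i = m then 0 else Suc i)" if "i < m" for i
    using that by (simp add: next_pos_def mod_Suc)
  have next_out: "xs ! next_pos i \<notin> I" if "i \<in> L" for i
  proof -
    have "i < m" "xs ! i \<in> I"
      using that by (simp_all add: L_def)
    moreover have "E (xs ! i) (xs ! Suc i)"
      using assms(1,3) \<open>i < m\<close> by (simp add: is_walk_iff successively_nth)
    moreover have "xs ! next_pos i = xs ! Suc i"
      using next_pos[OF \<open>i < m\<close>] nth_length_eq_hd[OF assms(2,3)] by auto
    ultimately show ?thesis
      using independent by metis
  qed
  have "inj_on next_pos L"
    using next_pos by (auto simp: inj_on_def L_def split: if_splits)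
  moreover have "next_pos ` L \<subseteq> {..<m} - L"
    using next_out assms(4) by (auto simp: L_def next_pos_def)
  ultimately have "card L \<le> card ({..<m} - L)"
    by (intro card_inj_on_le) auto
  also have "\<dots> = m - card L"
    by (simp add: card_Diff_subset L_def subset_eq)
  finally have "2 * card L \<le> m"
    by simp
  have "set xs \<inter> I \<subseteq> (!) xs ` L"
    using set_conv_nth_image_closed[OF assms(2-4)] by (auto simp: L_def)
  then have "card (set xs \<inter> I) \<le> card ((!) xs ` L)"
    by (intro card_mono) (simp_all add: L_def)
  also have "\<dots> \<le> card L"
    by (rule card_image_le) (simp add: L_def)
  finally show ?thesis
    using \<open>2 * card L \<le> m\<close> by simp
qed

lemma triangle_le_tsp:
  assumes "S \<subseteq> V" "a \<in> S" "b \<in> S" "c \<in> S"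
  shows "\<delta> a b + \<delta> b c + \<delta> c a \<le> tsp V E S"
proof -
  obtain xs where xs: "is_walk V E xs" "hd xs = last xs" "S \<subseteq> set xs" "length xs = Suc (tsp V E S)"
    using shortest_closed_walk[OF assms(1)] assms(2) by blast
  have "\<exists>p \<le> tsp V E S. xs ! p = v" if "v \<in> S" for v
    using that xs(3,4) by (auto simp: in_set_conv_nth less_Suc_eq_le)
  then obtain p q r where "p \<le> tsp V E S" "q \<le> tsp V E S" "r \<le> tsp V E S"
      "xs ! p = a" "xs ! q = b" "xs ! r = c"
    using assms(2-4) by metis
  then show ?thesis
    using closed_walk_triangle[OF xs(1,2,4), of p q r] by simp
qed

lemma tsp_lower_bound_card_2:
  assumes "S \<subseteq> V" "card S = 2"
  shows "dist_sum \<delta> S \<le> tsp V E S"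
proof -
  obtain a b where ab: "S = {a, b}" "a \<noteq> b"
    using assms(2) card_2_iff by metis
  moreover have "a \<in> V" "b \<in> V"
    using assms(1) ab by auto
  ultimately show ?thesis
    using triangle_le_tsp[OF assms(1), of a b b] by (simp add: dist_sum_def gdist_sym)
qed

lemma tsp_lower_bound_card_3:
  assumes "S \<subseteq> V" "card S = 3"
  shows "dist_sum \<delta> S \<le> 2 * tsp V E S"
proof -
  obtain a b c where abc: "S = {a, b, c}" "a \<noteq> b" "b \<noteq> c" "a \<noteq> c"
    using assms(2) card_3_iff by metis
  moreover have "a \<in> V" "b \<in> V" "c \<in> V"
    using assms(1) abc by auto
  ultimately show ?thesis
    using triangle_le_tsp[OF assms(1), of a b c] gdist_sym[of a b] gdist_sym[of b c] gdist_sym[of a c]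
    by (simp add: dist_sum_def)
qed

lemma tsp_lower_bound_complete:
  assumes "is_complete V E" "S \<subseteq> V" "2 \<le> card S"
  shows "dist_sum \<delta> S \<le> (card S - 1) * tsp V E S"
proof -
  have fin: "finite S"
    using assms(2) finite_V finite_subset by blast
  have row: "(\<Sum>b\<in>S. \<delta> a b) = card S - 1" if "a \<in> S" for a
  proof -
    have "(\<Sum>b\<in>S - {a}. \<delta> a b) = (\<Sum>b\<in>S - {a}. 1)"
      using assms(1,2) that by (intro sum.cong refl gdist_adj) (auto simp: is_complete_def)
    moreover have "\<delta> a a = 0"
      using assms(2) that by auto
    ultimately show ?thesis
      using fin that by (simp add: sum.remove)
  qed
  obtain xs where xs: "is_walk V E xs" "hd xs = last xs" "S \<subseteq> set xs" "length xs = Suc (tsp V E S)"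
    using shortest_closed_walk[OF assms(2)] assms(3) by force
  have "dist_sum \<delta> S = card S * (card S - 1)"
    using row by (simp add: dist_sum_def)
  also have "\<dots> \<le> (card S - 1) * tsp V E S"
    using closed_walk_length_ge_card[OF xs(1,2,4,3) assms(3)] by (simp add: mult.commute)
  finally show ?thesis .
qed

lemma dist_sum_star:
  assumes center: "c \<in> V" "\<And>u v. u \<in> V \<Longrightarrow> v \<in> V \<Longrightarrow> E u v \<longleftrightarrow> u \<noteq> v \<and> (u = c \<or> v = c)"
    and "S \<subseteq> V" "S \<noteq> {}"
  shows "dist_sum \<delta> S = 2 * (card S - 1) * card (S - {c})"
proof -
  define h where "h x = (if x = c then 0 else 1 :: nat)" for x
  have fin: "finite S"
    using assms(3) finite_V finite_subset by blast
  have H: "sum h S = card (S - {c})"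
    using fin by (simp add: h_def sum.If_cases Diff_eq)
  have dist: "\<delta> a b = h a + h b" if "a \<in> V" "b \<in> V" "a \<noteq> b" for a b
  proof (cases "a = c \<or> b = c")
    case True
    then show ?thesis
      using that center gdist_adj by (auto simp: h_def)
  next
    case False
    then have "\<delta> a b = 2"
      using that center by (intro gdist_eq_2[of a c b]) auto
    then show ?thesis
      using False by (simp add: h_def)
  qed
  have row: "(\<Sum>b\<in>S. \<delta> a b) + h a = (card S - 1) * h a + sum h S" if "a \<in> S" for a
  proof -
    have "(\<Sum>b\<in>S - {a}. \<delta> a b) = (\<Sum>b\<in>S - {a}. h a + h b)"
      using that assms(3) dist by (intro sum.cong) auto
    then have "(\<Sum>b\<in>S. \<delta> a b) = (\<Sum>b\<in>S - {a}. h a + h b)"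
      using fin that assms(3) by (simp add: sum.remove subset_eq)
    also have "\<dots> = (card S - 1) * h a + (\<Sum>b\<in>S - {a}. h b)"
      using fin that by (simp add: sum.distrib)
    finally show ?thesis
      using fin that by (simp add: sum.remove)
  qed
  have "(\<Sum>a\<in>S. (\<Sum>b\<in>S. \<delta> a b) + h a) = (\<Sum>a\<in>S. (card S - 1) * h a + sum h S)"
    using row by (rule sum.cong[OF refl])
  then have "dist_sum \<delta> S + sum h S = (card S - 1) * sum h S + card S * sum h S"
    by (simp add: dist_sum_def sum.distrib sum_distrib_left)
  moreover have "card S * sum h S = (card S - 1) * sum h S + sum h S"
    using fin assms(4) by (cases "card S") simp_all
  ultimately show ?thesis
    using H by simp
qed

lemma tsp_lower_bound_star:
  assumes "is_star V E" "S \<subseteq> V" "2 \<le> card S"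
  shows "dist_sum \<delta> S \<le> (card S - 1) * tsp V E S"
proof -
  obtain c where center: "c \<in> V" "\<And>u v. u \<in> V \<Longrightarrow> v \<in> V \<Longrightarrow> E u v \<longleftrightarrow> u \<noteq> v \<and> (u = c \<or> v = c)"
    using assms(1) unfolding is_star_def by blast
  obtain xs where xs: "is_walk V E xs" "hd xs = last xs" "S \<subseteq> set xs" "length xs = Suc (tsp V E S)"
    using shortest_closed_walk[OF assms(2)] assms(3) by force
  have "0 < tsp V E S"
    using closed_walk_length_ge_card[OF xs(1,2,4,3) assms(3)] assms(3) by simp
  moreover have "\<not> E x y" if "x \<in> V - {c}" "y \<in> V - {c}" for x y
    using that center by auto
  ultimately have "2 * card (set xs \<inter> (V - {c})) \<le> tsp V E S"
    using closed_walk_independent_visits[OF xs(1,2,4)] by blast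
  moreover have "card (S - {c}) \<le> card (set xs \<inter> (V - {c}))"
    using xs(3) assms(2) by (intro card_mono) auto
  ultimately have "2 * card (S - {c}) \<le> tsp V E S"
    by linarith
  moreover have "S \<noteq> {}"
    using assms(3) by auto
  then have "dist_sum \<delta> S = (card S - 1) * (2 * card (S - {c}))"
    using dist_sum_star[OF center assms(2)] by (simp add: ac_simps)
  ultimately show ?thesis
    by simp
qed

end

section \<open>Graphs with all four-point pairings equal\<close>

lemma successively_leaves_set:
  assumes "successively R xs" "xs \<noteq> []" "hd xs \<in> A" "last xs \<notin> A"
  shows "\<exists>y\<in>set xs. \<exists>x\<in>set xs. y \<in> A \<and> x \<notin> A \<and> R y x"
  using assms
proof (induction xs rule: induct_list012)
  case (3 y x zs)
  then show ?case
    by (cases "x \<in> A") auto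
qed auto

text \<open>Since \<open>a, b, c, e\<close> range over all orderings, this says that the three pairings
  of any four vertices have the same weight.\<close>

definition four_point_equal :: "'a set \<Rightarrow> ('a \<Rightarrow> 'a \<Rightarrow> nat) \<Rightarrow> bool" where
  "four_point_equal V d \<longleftrightarrow>
     (\<forall>a b c e. {a, b, c, e} \<subseteq> V \<longrightarrow> distinct [a, b, c, e] \<longrightarrow> d a b + d c e = d a c + d b e)"

lemma four_point_equalD:
  "four_point_equal V d \<Longrightarrow> {a, b, c, e} \<subseteq> V \<Longrightarrow> distinct [a, b, c, e] \<Longrightarrow>
    d a b + d c e = d a c + d b e"
  unfolding four_point_equal_def by blast

context connected_simple_graph
begin

lemma edge_leaving_set:
  assumes "A \<subseteq> V" "a \<in> A" "b \<in> V - A"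
  obtains y x where "y \<in> A" "x \<in> V - A" "E y x"
proof -
  obtain xs where "is_walk V E xs" "hd xs = a" "last xs = b"
    using connected assms unfolding connected_graph_def by blast
  then show ?thesis
    using successively_leaves_set[of E xs A] assms that by (auto simp: is_walk_iff)
qed

lemma nonadjacent_obtain_induced_path:
  assumes "p \<in> V" "q \<in> V" "p \<noteq> q" "\<not> E p q"
  obtains y z where "E p y" "E y z" "z \<noteq> p" "\<not> E p z"
proof -
  define A where "A = {v \<in> V. v = p \<or> E p v}"
  obtain y z where "y \<in> A" "z \<in> V - A" "E y z"
    using edge_leaving_set[of A p q] assms by (auto simp: A_def)
  moreover have "y \<noteq> p"
    using calculation by (auto simp: A_def)
  ultimately show ?thesis
    using that by (auto simp: A_def)
qed

lemma four_point_equal_hub: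
  assumes "four_point_equal V \<delta>" "E u c" "E c w" "u \<noteq> w" "\<not> E u w" "x \<in> V" "x \<noteq> c"
  shows "E c x"
proof (rule ccontr)
  assume "\<not> E c x"
  then obtain y z where yz: "E c y" "E y z" "z \<noteq> c" "\<not> E c z"
    using nonadjacent_obtain_induced_path[of c x] assms(2,6,7) adj_in_V by blast
  have V: "u \<in> V" "c \<in> V" "w \<in> V" "y \<in> V" "z \<in> V"
    using assms(2,3) yz(1,2) adj_in_V by auto
  have "u \<noteq> c" "w \<noteq> c" "u \<noteq> z" "w \<noteq> z"
    using assms(2,3) yz(4) adj_in_V adj_sym by blast+
  then have "\<delta> u w + \<delta> z c = \<delta> u z + \<delta> w c"
    using four_point_equalD[OF assms(1), of u w z c] assms(4) yz(3) V by simp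
  moreover have "\<delta> u w = 2" "\<delta> z c = 2" "\<delta> w c = 1"
    using gdist_eq_2 assms(2-5) yz adj_sym gdist_adj gdist_sym V by auto
  ultimately have "\<delta> u z = 3"
    by simp
  then have "y \<noteq> u"
    using yz(2) gdist_adj by auto
  then have "\<delta> u z + \<delta> c y = \<delta> u c + \<delta> z y"
    using four_point_equalD[OF assms(1), of u z c y] V \<open>u \<noteq> c\<close> \<open>u \<noteq> z\<close> yz adj_in_V by auto
  moreover have "\<delta> c y = 1" "\<delta> u c = 1" "\<delta> z y = 1"
    using gdist_adj assms(2) yz(1,2) adj_sym by auto
  ultimately show False
    using \<open>\<delta> u z = 3\<close> by simp
qed

lemma four_point_equal_leaf:
  assumes "four_point_equal V \<delta>" "\<And>x. x \<in> V \<Longrightarrow> x \<noteq> c \<Longrightarrow> E c x"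
    and "a \<in> V" "b \<in> V" "a \<noteq> c" "b \<noteq> c" "a \<noteq> b" "\<not> E a b" "x \<in> V" "x \<noteq> c"
  shows "\<not> E a x"
proof (cases "x \<in> {a, b}")
  case False
  have "c \<in> V"
    using assms(2,3,5) adj_in_V by blast
  then have "\<delta> b a + \<delta> c x = \<delta> b c + \<delta> a x"
    using four_point_equalD[OF assms(1), of b a c x] assms(3-7,9,10) False by auto
  moreover have "\<delta> b a = 2"
    using gdist_eq_2[of b c a] assms(2-8) adj_sym by auto
  moreover have "\<delta> c x = 1" "\<delta> b c = 1"
    using gdist_adj assms(2,4,6,9,10) adj_sym by auto
  ultimately have "\<delta> a x = 2"
    by simp
  then show ?thesis
    using gdist_adj by auto
qed (use assms(8) adj_in_V in auto)

lemma four_point_equal_imp_star_or_complete: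
  assumes "four_point_equal V \<delta>"
  shows "is_star V E \<or> is_complete V E"
proof (rule disjCI)
  assume "\<not> is_complete V E"
  then obtain p q where "p \<in> V" "q \<in> V" "p \<noteq> q" "\<not> E p q"
    using adj_in_V unfolding is_complete_def by blast
  then obtain c w where "E p c" "E c w" "w \<noteq> p" "\<not> E p w"
    by (rule nonadjacent_obtain_induced_path)
  then have hub: "E c x" if "x \<in> V" "x \<noteq> c" for x
    using four_point_equal_hub assms that by blast
  have V: "p \<in> V" "c \<in> V" "w \<in> V" "p \<noteq> c" "w \<noteq> c"
    using \<open>E p c\<close> \<open>E c w\<close> adj_in_V by auto
  note leaf = four_point_equal_leaf[OF assms hub]
  have no_edge: "\<not> E x y" if "x \<in> V" "y \<in> V" "x \<noteq> c" "y \<noteq> c" for x y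
  proof (cases "x = p")
    case True
    then show ?thesis
      using leaf[of p w y] \<open>\<not> E p w\<close> \<open>w \<noteq> p\<close> V that by blast
  next
    case False
    have "\<not> E x p"
      using leaf[of p w x] \<open>\<not> E p w\<close> \<open>w \<noteq> p\<close> V that adj_sym by blast
    then show ?thesis
      using leaf[of x p y] False V that by blast
  qed
  show "is_star V E"
    unfolding is_star_def
    using V(2) hub no_edge adj_sym adj_in_V by metis
qed

section \<open>The bound and its equality cases\<close>

lemma tsp_lower_bound:
  assumes "S \<subseteq> V" "card S = k" "2 \<le> k" "k \<in> {2, 3} \<or> is_star V E \<or> is_complete V E"
  shows "dist_sum \<delta> S \<le> (k - 1) * tsp V E S"
proof -
  consider "k = 2" | "k = 3" | "is_star V E" | "is_complete V E"
    using assms(4) by blast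
  then show ?thesis
    by cases (use assms tsp_lower_bound_card_2 tsp_lower_bound_card_3 tsp_lower_bound_star
        tsp_lower_bound_complete in auto)
qed

lemma tsp_bound_tight_iff:
  assumes "2 \<le> k" "k \<le> card V"
  shows "(\<forall>S. S \<subseteq> V \<and> card S = k \<longrightarrow> (k - 1) * tsp V E S = dist_sum \<delta> S)
    \<longleftrightarrow> k \<in> {2, 3} \<or> (3 < k \<and> (is_star V E \<or> is_complete V E))"
proof
  assume tight: "\<forall>S. S \<subseteq> V \<and> card S = k \<longrightarrow> (k - 1) * tsp V E S = dist_sum \<delta> S"
  show "k \<in> {2, 3} \<or> (3 < k \<and> (is_star V E \<or> is_complete V E))"
  proof (rule ccontr)
    assume "\<not> ?thesis"
    then have "4 \<le> k" "\<not> four_point_equal V \<delta>"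
      using assms(1) four_point_equal_imp_star_or_complete by auto
    then obtain a b c e where abce: "{a, b, c, e} \<subseteq> V" "distinct [a, b, c, e]"
        "\<delta> a b + \<delta> c e \<noteq> \<delta> a c + \<delta> b e"
      unfolding four_point_equal_def by blast
    have "k - 4 \<le> card (V - {a, b, c, e})"
      using abce(1,2) assms(2) finite_V by (simp add: card_Diff_subset)
    then obtain T where T: "T \<subseteq> V - {a, b, c, e}" "card T = k - 4"
      by (rule obtain_subset_with_card_n)
    define S where "S = T \<union> {a, b, c, e}"
    have "card S = card T + card {a, b, c, e}"
      unfolding S_def using T(1) finite_V finite_subset by (intro card_Un_disjoint) auto
    then have "card S = k"
      using T(2) abce(2) \<open>4 \<le> k\<close> by simp
    moreover have "S \<subseteq> V"
      using T(1) abce(1) by (auto simp: S_def)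
    moreover have "(card S - 1) * tsp V E S < dist_sum \<delta> S"
      using tsp_upper_bound_strict[OF \<open>S \<subseteq> V\<close> _ abce(2,3)] by (simp add: S_def)
    ultimately show False
      using tight by auto
  qed
next
  assume "k \<in> {2, 3} \<or> (3 < k \<and> (is_star V E \<or> is_complete V E))"
  then have "(k - 1) * tsp V E S = dist_sum \<delta> S" if "S \<subseteq> V" "card S = k" for S
    using tsp_upper_bound[of S] tsp_lower_bound[of S k] that assms(1) by (intro order_antisym) auto
  then show "\<forall>S. S \<subseteq> V \<and> card S = k \<longrightarrow> (k - 1) * tsp V E S = dist_sum \<delta> S"
    by blast
qed

lemma wiener_tsp_bound:
  assumes "2 \<le> k"
  defines "B \<equiv> ((card V - 2) choose (k - 2)) * (\<Sum>u\<in>V. \<Sum>v\<in>V. \<delta> u v)"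
  shows "(k - 1) * wiener_tsp V E k \<le> B"
    and "(k - 1) * wiener_tsp V E k = B \<longleftrightarrow>
      (\<forall>S. S \<subseteq> V \<and> card S = k \<longrightarrow> (k - 1) * tsp V E S = dist_sum \<delta> S)"
proof -
  let ?Sk = "{S. S \<subseteq> V \<and> card S = k}"
  have fin: "finite ?Sk"
    using finite_V by simp
  have le: "(k - 1) * tsp V E S \<le> dist_sum \<delta> S" if "S \<in> ?Sk" for S
    using tsp_upper_bound that assms(1) by auto
  have lhs: "(k - 1) * wiener_tsp V E k = (\<Sum>S\<in>?Sk. (k - 1) * tsp V E S)"
    by (simp add: wiener_tsp_def sum_distrib_left)
  have rhs: "B = (\<Sum>S\<in>?Sk. dist_sum \<delta> S)"
    using sum_dist_sum_subsets[OF finite_V assms(1), of \<delta>] by (simp add: B_def)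
  show "(k - 1) * wiener_tsp V E k \<le> B"
    unfolding lhs rhs using le by (rule sum_mono)
  show "(k - 1) * wiener_tsp V E k = B \<longleftrightarrow>
      (\<forall>S. S \<subseteq> V \<and> card S = k \<longrightarrow> (k - 1) * tsp V E S = dist_sum \<delta> S)"
    unfolding lhs rhs
  proof
    assume "(\<Sum>S\<in>?Sk. (k - 1) * tsp V E S) = (\<Sum>S\<in>?Sk. dist_sum \<delta> S)"
    then show "\<forall>S. S \<subseteq> V \<and> card S = k \<longrightarrow> (k - 1) * tsp V E S = dist_sum \<delta> S"
      using sum_mono_inv[of "\<lambda>S. (k - 1) * tsp V E S" ?Sk "dist_sum \<delta>"] le fin by blast
  qed (intro sum.cong; simp)
qed

end

lemma avg_dist_scaled:
  assumes "2 \<le> k" "k \<le> card V"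
  shows "real k * real (card V choose k) * avg_dist V E
    = 2 / (real k - 1) * real ((card V - 2) choose (k - 2)) * wiener V E"
proof -
  define n where "n = card V"
  have "(n choose k) * (k choose 2) = (n choose 2) * ((n - 2) choose (k - 2))"
    using assms by (intro choose_mult) (simp_all add: n_def)
  moreover have "2 * (k choose 2) = k * (k - 1)"
    using times_binomial_minus1_eq[of 2 k] by simp
  ultimately have "k * (k - 1) * (n choose k) = 2 * (n choose 2) * ((n - 2) choose (k - 2))"
    by (metis mult.assoc mult.commute)
  moreover have "real (k - 1) = real k - 1"
    using assms(1) by (simp add: of_nat_diff)
  ultimately have I: "real k * (real k - 1) * real (n choose k) = 2 * real (n choose 2) * real ((n - 2) choose (k - 2))"
    by (metis of_nat_mult of_nat_numeral)
  have nz: "real (n choose 2) \<noteq> 0" "real k - 1 \<noteq> 0"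
    using assms by (simp_all add: n_def)
  have "real k * real (n choose k) * avg_dist V E
      = real k * (real k - 1) * real (n choose k) * wiener V E / ((real k - 1) * real (n choose 2))"
    using nz by (simp add: avg_dist_def n_def)
  also have "\<dots> = 2 * real (n choose 2) * real ((n - 2) choose (k - 2)) * wiener V E / ((real k - 1) * real (n choose 2))"
    by (simp only: I)
  also have "\<dots> = 2 / (real k - 1) * real ((n - 2) choose (k - 2)) * wiener V E"
    using nz by simp
  finally show ?thesis
    by (simp add: n_def)
qed

theorem theorem3:
  fixes V :: "'a set" and E :: "'a \<Rightarrow> 'a \<Rightarrow> bool" and k :: nat
  assumes "simple_graph V E" and "connected_graph V E"
    and "k \<ge> 2" and "card V \<ge> k"
  shows "real (wiener_tsp V E k) \<le> real k * real (card V choose k) * avg_dist V E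
    \<and> real k * real (card V choose k) * avg_dist V E
        = 2 / (real k - 1) * real (card V - 2 choose (k - 2)) * wiener V E
    \<and> (real (wiener_tsp V E k) = real k * real (card V choose k) * avg_dist V E
        \<longleftrightarrow> (k \<in> {2, 3} \<or> (k > 3 \<and> (is_star V E \<or> is_complete V E))))"
proof -
  interpret connected_simple_graph V E
    using assms(1,2) by unfold_locales
  define B where "B = ((card V - 2) choose (k - 2)) * (\<Sum>u\<in>V. \<Sum>v\<in>V. \<delta> u v)"
  have k1: "real (k - 1) = real k - 1" "real k - 1 > 0"
    using assms(3) by (simp_all add: of_nat_diff)
  have "wiener V E = real (\<Sum>u\<in>V. \<Sum>v\<in>V. \<delta> u v) / 2"
    by (simp add: wiener_def)
  then have scaled: "real k * real (card V choose k) * avg_dist V E = real B / real (k - 1)"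
    using avg_dist_scaled[OF assms(3,4)] k1 by (simp add: B_def)
  have "real (k - 1) * real (wiener_tsp V E k) \<le> real B"
    using wiener_tsp_bound(1)[OF assms(3)] unfolding B_def[symmetric] of_nat_mult[symmetric] of_nat_le_iff .
  then have "real (wiener_tsp V E k) \<le> real B / real (k - 1)"
    using k1 by (simp add: pos_le_divide_eq mult.commute)
  moreover have "real (k - 1) * real (wiener_tsp V E k) = real B
      \<longleftrightarrow> k \<in> {2, 3} \<or> (3 < k \<and> (is_star V E \<or> is_complete V E))"
    using wiener_tsp_bound(2)[OF assms(3)] tsp_bound_tight_iff[OF assms(3,4)]
    unfolding B_def[symmetric] of_nat_mult[symmetric] of_nat_eq_iff by simp
  then have "real (wiener_tsp V E k) = real B / real (k - 1)
      \<longleftrightarrow> k \<in> {2, 3} \<or> (3 < k \<and> (is_star V E \<or> is_complete V E))"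
    using k1 by (simp add: eq_divide_eq mult.commute)
  ultimately show ?thesis
    using avg_dist_scaled[OF assms(3,4)] scaled by simp
qed

end
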